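(* Every D-cube has property L.
   Context: For sets $U,V$ let $U\oplus V=(U\cup V)\setminus(U\cap V)$. An $n$-cube orientation is a directed graph $\mathcal{O}$ on the vertex set of all subsets of $[n]$ containing, for each vertex $V$ and $i\in[n]$, exactly one of the directed edges $(V,V\oplus\{i\})$, $(V\oplus\{i\},V)$; its outmap is $\phi(V)=\{i: (V,V\oplus\{i\})\in\mathcal{O}\}$, which determines $\mathcal{O}$. For a vertex $V$, the L-graph $\mathcal{L}_{\mathcal{O}}(V)$ has vertex set $[n]\setminus V$ and an arc $(i,j)$ for distinct $i,j\notin V$ whenever $j\in\phi(V)\oplus\phi(V\cup\{i\})$; $\mathcal{O}$ has property L if all its L-graphs are acyclic. Given $M\in\mathbb{R}^{n\times n}$ and $V\subseteq[n]$, let $M(V)$ be the $n\times n$ matrix whose $i$-th column is $-M_i$ (the negative of the $i$-th column of $M$) if $i\in V$ and the $i$-th unit vector $I_i$ if $i\notin V$. A D-cube is an $n$-cube orientation whose outmap is $\phi(V)=\{i\in[n]: (M(V)^{-1}\mathbf{q})_i<0\}$ for all $V\subseteq[n]$, where $M$ is a symmetric positive definite matrix and $\mathbf{q}\in\mathbb{R}^n$ is generic with respect to $M$, meaning that no entry of $M(V)^{-1}\mathbf{q}$ is zero for any $V\subseteq[n]$. (Such an orientation is a unique sink orientation: every face has exactly one sink.) *)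

theory Defs
  imports "HOL-Analysis.Analysis"
begin

text \<open>The ground set [n] is modelled by a finite type 'n (so [n] = UNIV :: 'n set),
  vertices of the n-cube are sets of type 'n set, and n x n matrices are real^'n^'n.\<close>

definition symdiff :: "'a set \<Rightarrow> 'a set \<Rightarrow> 'a set" where
  "symdiff U V = (U \<union> V) - (U \<inter> V)"

text \<open>An outmap of an n-cube orientation: for every vertex V and direction i exactly one
  of the edges (V, V xor {i}), (V xor {i}, V) is present.\<close>
definition cube_orientation_outmap :: "('n::finite set \<Rightarrow> 'n set) \<Rightarrow> bool" where
  "cube_orientation_outmap \<phi> \<longleftrightarrow>
     (\<forall>V i. i \<in> \<phi> V \<longleftrightarrow> i \<notin> \<phi> (symdiff V {i}))"

definition L_graph :: "('n::finite set \<Rightarrow> 'n set) \<Rightarrow> 'n set \<Rightarrow> ('n \<times> 'n) set" where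
  "L_graph \<phi> V = {(i, j). i \<notin> V \<and> j \<notin> V \<and> i \<noteq> j \<and> j \<in> symdiff (\<phi> V) (\<phi> (V \<union> {i}))}"

definition property_L :: "('n::finite set \<Rightarrow> 'n set) \<Rightarrow> bool" where
  "property_L \<phi> \<longleftrightarrow> (\<forall>V. acyclic (L_graph \<phi> V))"

definition sym_pos_def :: "real^'n^'n \<Rightarrow> bool" where
  "sym_pos_def M \<longleftrightarrow> transpose M = M \<and> (\<forall>x. x \<noteq> 0 \<longrightarrow> x \<bullet> (M *v x) > 0)"

definition Mat_V :: "real^'n^'n \<Rightarrow> 'n set \<Rightarrow> real^'n^'n" where
  "Mat_V M V = (\<chi> r c. if c \<in> V then - (M $ r $ c) else (if r = c then 1 else 0))"

definition generic_wrt :: "real^'n^'n \<Rightarrow> real^'n \<Rightarrow> bool" where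
  "generic_wrt M q \<longleftrightarrow> (\<forall>V i. (matrix_inv (Mat_V M V) *v q) $ i \<noteq> 0)"

definition D_outmap :: "real^'n^'n \<Rightarrow> real^'n \<Rightarrow> 'n set \<Rightarrow> 'n set" where
  "D_outmap M q V = {i. (matrix_inv (Mat_V M V) *v q) $ i < 0}"

definition D_cube :: "('n::finite set \<Rightarrow> 'n set) \<Rightarrow> bool" where
  "D_cube \<phi> \<longleftrightarrow> cube_orientation_outmap \<phi> \<and>
     (\<exists>M q. sym_pos_def M \<and> generic_wrt M q \<and> (\<forall>V. \<phi> V = D_outmap M q V))"

end

theory Submission
  imports Defs
begin

(* Let x(V) = M(V)^-1 q and split it as w(V) (its entries outside V) and z(V) (its entries
   in V); then w(V) = q + M z(V), and phi(V) records the signs of w(V) outside V.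
   Fix V. For k not in V let e_k be supported on V + {k} with e_k(k) = 1 and M e_k zero on V,
   and g_k = e_k . M e_k > 0. The potential p(k) = w(V)_k^2 / g_k decreases strictly along every
   arc (i, j) of L(V): for d = z(V + {i}) - z(V) the vector M d vanishes on V and equals -w(V)_i
   at i, which gives d . M d = w(V)_i^2 / g_i, while (M d)_j = w(V + {i})_j - w(V)_j exceeds
   |w(V)_j| in absolute value because of the sign change at j. Cauchy-Schwarz for the inner
   product given by M, applied to e_j and d, turns this into p(j) < p(i). *)

lemma acyclic_if_potential_decreasing:
  fixes p :: "'a \<Rightarrow> 'b::order"
  assumes "\<And>a b. (a, b) \<in> r \<Longrightarrow> p b < p a"
  shows "acyclic r"
proof (rule acyclic_subset)
  have "trans {(a, b). p b < p a}"
    by (auto intro: transI)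
  then show "acyclic {(a, b). p b < p a}"
    by (simp add: acyclic_def)
qed (use assms in auto)

definition restrict_coords :: "'n::finite set \<Rightarrow> real^'n \<Rightarrow> real^'n" where
  "restrict_coords V x = (\<chi> c. if c \<in> V then x $ c else 0)"

lemma Mat_V_mult:
  fixes M :: "real^'n::finite^'n"
  shows "Mat_V M V *v x = restrict_coords (- V) x - M *v restrict_coords V x"
proof -
  have "(Mat_V M V *v x) $ r = (restrict_coords (- V) x - M *v restrict_coords V x) $ r" for r
  proof -
    have "(Mat_V M V *v x) $ r
        = (\<Sum>c\<in>UNIV. (if c = r then (if r \<in> V then 0 else x $ r) else 0)
                      - M $ r $ c * (if c \<in> V then x $ c else 0))"
      unfolding Mat_V_def matrix_vector_mult_def by (auto intro: sum.cong)
    also have "\<dots> = (\<Sum>c\<in>UNIV. if c = r then (if r \<in> V then 0 else x $ r) else 0)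
                      - (\<Sum>c\<in>UNIV. M $ r $ c * (if c \<in> V then x $ c else 0))"
      by (rule sum_subtractf)
    finally show ?thesis
      by (simp add: restrict_coords_def matrix_vector_mult_def if_distrib cong: if_cong)
  qed
  then show ?thesis
    by (simp add: vec_eq_iff)
qed

lemma inner_supported_insert:
  fixes a b :: "real^'n::finite"
  assumes "\<And>c. c \<notin> insert k V \<Longrightarrow> a $ c = 0" and "\<And>c. c \<in> V \<Longrightarrow> b $ c = 0"
  shows "a \<bullet> b = a $ k * b $ k"
proof -
  have "a \<bullet> b = (\<Sum>c\<in>UNIV. if c = k then a $ c * b $ c else 0)"
    unfolding inner_vec_def using assms by (intro sum.cong) auto
  then show ?thesis
    by simp
qed

lemma inner_mult_sym_matrix_commute:
  fixes M :: "real^'n::finite^'n"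
  assumes "transpose M = M"
  shows "a \<bullet> (M *v b) = b \<bullet> (M *v a)"
  by (metis assms dot_lmul_matrix inner_commute vector_transpose_matrix)

lemma sym_pos_def_nonneg:
  assumes "sym_pos_def M"
  shows "0 \<le> x \<bullet> (M *v x)"
  using assms unfolding sym_pos_def_def by (cases "x = 0") (auto intro: less_imp_le)

lemma sym_pos_def_Cauchy_Schwarz:
  fixes M :: "real^'n::finite^'n"
  assumes sp: "sym_pos_def M"
  shows "(a \<bullet> (M *v b))\<^sup>2 \<le> (a \<bullet> (M *v a)) * (b \<bullet> (M *v b))"
proof (cases "b = 0")
  case True
  then show ?thesis by simp
next
  case False
  define A B C where "A = a \<bullet> (M *v a)" and "B = b \<bullet> (M *v b)" and "C = a \<bullet> (M *v b)"
  have "B > 0"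
    using sp False unfolding sym_pos_def_def B_def by simp
  have "b \<bullet> (M *v a) = C"
    using sp inner_mult_sym_matrix_commute unfolding sym_pos_def_def C_def by metis
  then have "(B *\<^sub>R a - C *\<^sub>R b) \<bullet> (M *v (B *\<^sub>R a - C *\<^sub>R b)) = B * (A * B - C\<^sup>2)"
    by (simp add: algebra_simps power2_eq_square flip: A_def B_def C_def)
  then have "0 \<le> B * (A * B - C\<^sup>2)"
    using sym_pos_def_nonneg[OF sp] by metis
  with \<open>B > 0\<close> show ?thesis
    by (simp add: zero_le_mult_iff A_def B_def C_def)
qed

lemma invertible_Mat_V:
  fixes M :: "real^'n::finite^'n"
  assumes sp: "sym_pos_def M"
  shows "invertible (Mat_V M V)"
proof -
  have "x = 0" if "Mat_V M V *v x = 0" for x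
  proof -
    have w: "restrict_coords (- V) x = M *v restrict_coords V x"
      using that by (simp add: Mat_V_mult)
    have "restrict_coords V x \<bullet> restrict_coords (- V) x = 0"
      unfolding inner_vec_def restrict_coords_def by (intro sum.neutral) auto
    then have "restrict_coords V x = 0"
      using sp unfolding w sym_pos_def_def by force
    with w have "restrict_coords V x = 0 \<and> restrict_coords (- V) x = 0"
      by simp
    then show "x = 0"
      by (simp add: vec_eq_iff restrict_coords_def) meson
  qed
  then show ?thesis
    using matrix_left_invertible_ker invertible_left_inverse by blast
qed

lemma invertible_mult_matrix_inv:
  fixes A :: "real^'n::finite^'n"
  assumes "invertible A"
  shows "A *v (matrix_inv A *v b) = b"
proof -
  have "A ** matrix_inv A = mat 1 \<and> matrix_inv A ** A = mat 1"
    using assms unfolding invertible_def matrix_inv_def by (rule someI_ex)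
  then show ?thesis
    by (simp add: matrix_vector_mul_assoc)
qed

lemma complementary_solution:
  fixes M :: "real^'n::finite^'n"
  assumes "sym_pos_def M"
  shows "restrict_coords (- V) (matrix_inv (Mat_V M V) *v b)
    = b + M *v restrict_coords V (matrix_inv (Mat_V M V) *v b)"
  using invertible_mult_matrix_inv[OF invertible_Mat_V[OF assms], of V b]
  by (simp add: Mat_V_mult algebra_simps)

text \<open>For k \<notin> V, schur_compl M V k is the Schur complement of the block of M on V in the
  principal submatrix of M on V \<union> {k}.\<close>
definition schur_vec :: "real^'n^'n \<Rightarrow> 'n::finite set \<Rightarrow> 'n \<Rightarrow> real^'n" where
  "schur_vec M V k = axis k 1 + restrict_coords V (matrix_inv (Mat_V M V) *v (M *v axis k 1))"

definition schur_compl :: "real^'n^'n \<Rightarrow> 'n::finite set \<Rightarrow> 'n \<Rightarrow> real" where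
  "schur_compl M V k = schur_vec M V k \<bullet> (M *v schur_vec M V k)"

lemma schur_vec_outside: "c \<notin> insert k V \<Longrightarrow> schur_vec M V k $ c = 0"
  by (simp add: schur_vec_def restrict_coords_def axis_def)

lemma schur_vec_self: "k \<notin> V \<Longrightarrow> schur_vec M V k $ k = 1"
  by (simp add: schur_vec_def restrict_coords_def axis_def)

lemma mult_schur_vec_eq_0_on:
  assumes "sym_pos_def M" and "c \<in> V"
  shows "(M *v schur_vec M V k) $ c = 0"
proof -
  have "M *v schur_vec M V k
      = restrict_coords (- V) (matrix_inv (Mat_V M V) *v (M *v axis k 1))"
    using complementary_solution[OF assms(1), of V "M *v axis k 1"]
    by (simp add: schur_vec_def matrix_vector_right_distrib)
  with assms(2) show ?thesis
    by (simp add: restrict_coords_def)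
qed

lemma schur_compl_pos:
  assumes "sym_pos_def M" and "k \<notin> V"
  shows "0 < schur_compl M V k"
proof -
  have "schur_vec M V k \<noteq> 0"
    using schur_vec_self[OF assms(2), of M] by force
  with assms(1) show ?thesis
    unfolding sym_pos_def_def schur_compl_def by blast
qed

lemma schur_compl_eq_mult_schur_vec:
  assumes "sym_pos_def M" and "k \<notin> V"
  shows "schur_compl M V k = (M *v schur_vec M V k) $ k"
  unfolding schur_compl_def
  using inner_supported_insert[OF schur_vec_outside mult_schur_vec_eq_0_on[OF assms(1)]]
  by (simp add: schur_vec_self[OF assms(2)])

lemma schur_potential_less:
  fixes M :: "real^'n::finite^'n" and d :: "real^'n"
  assumes sp: "sym_pos_def M" and i: "i \<notin> V" and j: "j \<notin> V"
    and d_supp: "\<And>c. c \<notin> insert i V \<Longrightarrow> d $ c = 0"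
    and Md_V: "\<And>c. c \<in> V \<Longrightarrow> (M *v d) $ c = 0"
    and Md_i: "(M *v d) $ i = - a" and Md_j: "(M *v d) $ j = b' - b"
    and sign_change: "b * b' < 0"
  shows "b\<^sup>2 / schur_compl M V j < a\<^sup>2 / schur_compl M V i"
proof -
  define e where "e k = schur_vec M V k" for k
  define g where "g k = schur_compl M V k" for k
  have ei: "e i \<bullet> (M *v d) = - a"
    using inner_supported_insert[OF schur_vec_outside Md_V] schur_vec_self[OF i] Md_i
    by (simp add: e_def)
  have "d \<bullet> (M *v e i) = d $ i * g i"
    using inner_supported_insert[OF d_supp mult_schur_vec_eq_0_on[OF sp]] schur_compl_eq_mult_schur_vec[OF sp i]
    by (simp add: e_def g_def)
  moreover have "e i \<bullet> (M *v d) = d \<bullet> (M *v e i)"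
    using sp inner_mult_sym_matrix_commute unfolding sym_pos_def_def by blast
  ultimately have a_eq: "a = - d $ i * g i"
    using ei by simp
  have dd: "d \<bullet> (M *v d) = d $ i * d $ i * g i"
    using inner_supported_insert[OF d_supp Md_V] Md_i a_eq by simp
  have ej: "e j \<bullet> (M *v d) = b' - b"
    using inner_supported_insert[OF schur_vec_outside Md_V] schur_vec_self[OF j] Md_j
    by (simp add: e_def)
  have "(b' - b)\<^sup>2 = b\<^sup>2 + (b'\<^sup>2 - 2 * (b * b'))"
    by (simp add: power2_diff algebra_simps)
  then have "b\<^sup>2 < (b' - b)\<^sup>2"
    using sign_change zero_le_power2[of b'] by linarith
  also have "\<dots> \<le> g j * (d $ i * d $ i * g i)"
    using sym_pos_def_Cauchy_Schwarz[OF sp, of "e j" d] ej dd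
    by (simp add: e_def g_def schur_compl_def)
  finally have "b\<^sup>2 / g j < d $ i * d $ i * g i"
    using schur_compl_pos[OF sp j] by (simp add: g_def divide_less_eq mult.commute)
  also have "\<dots> = a\<^sup>2 / g i"
    using schur_compl_pos[OF sp i] a_eq by (simp add: g_def power2_eq_square field_simps)
  finally show ?thesis
    by (simp add: g_def)
qed

lemma D_outmap_L_graph_arc_potential_decreasing:
  fixes M :: "real^'n::finite^'n"
  assumes sp: "sym_pos_def M" and gen: "generic_wrt M q"
    and arc: "(i, j) \<in> L_graph (D_outmap M q) V"
  defines "x \<equiv> \<lambda>W. matrix_inv (Mat_V M W) *v q"
  shows "(x V $ j)\<^sup>2 / schur_compl M V j < (x V $ i)\<^sup>2 / schur_compl M V i"
proof -
  define V' where "V' = insert i V"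
  from arc have i: "i \<notin> V" and j: "j \<notin> V" "j \<notin> V'"
    and flip: "j \<in> symdiff (D_outmap M q V) (D_outmap M q V')"
    unfolding L_graph_def V'_def by auto
  define d where "d = restrict_coords V' (x V') - restrict_coords V (x V)"
  have Md: "M *v d = restrict_coords (- V') (x V') - restrict_coords (- V) (x V)"
    using complementary_solution[OF sp, of V' q] complementary_solution[OF sp, of V q]
    by (simp add: d_def x_def matrix_vector_mult_diff_distrib)
  have "x V $ j \<noteq> 0" "x V' $ j \<noteq> 0"
    using gen unfolding generic_wrt_def x_def by blast+
  moreover have "x V $ j < 0 \<longleftrightarrow> \<not> x V' $ j < 0"
    using flip unfolding symdiff_def D_outmap_def x_def by auto
  ultimately have "x V $ j * x V' $ j < 0"
    by (auto simp: mult_less_0_iff)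
  moreover have "d $ c = 0" if "c \<notin> insert i V" for c
    using that by (simp add: d_def V'_def restrict_coords_def)
  ultimately show ?thesis
    using i j by (intro schur_potential_less[OF sp i j(1), where d = d])
      (auto simp: Md V'_def restrict_coords_def)
qed

theorem theorem5p2:
  fixes \<phi> :: "'n::finite set \<Rightarrow> 'n set"
  assumes "D_cube \<phi>"
  shows "property_L \<phi>"
proof -
  obtain M q where sp: "sym_pos_def M" and gen: "generic_wrt M q"
    and \<phi>_eq: "\<phi> = D_outmap M q"
    using assms unfolding D_cube_def by blast
  show ?thesis
    unfolding property_L_def \<phi>_eq
  proof
    fix V
    show "acyclic (L_graph (D_outmap M q) V)"
      by (rule acyclic_if_potential_decreasing[where
            p = "\<lambda>k. ((matrix_inv (Mat_V M V) *v q) $ k)\<^sup>2 / schur_compl M V k"])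
        (rule D_outmap_L_graph_arc_potential_decreasing[OF sp gen])
  qed
qed

end
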